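(* Let $R$ be a commutative ring with unit and let $S'\subset S\subset \mathbb{N}=\{1,2,\ldots\}$. Suppose that for each $n\in S$ there is a finite sequence $n'=n_0\Leftrightarrow_R n_1\Leftrightarrow_R\cdots\Leftrightarrow_R n_r=n$ ($r\ge 0$) of elements of $S$ with $n'\in S'$. Then the homomorphism $\rho^R_{S,S'}\colon R[q]^S\to R[q]^{S'}$ is injective. In particular, if $S\subset\mathbb{N}$ is $\Leftrightarrow_R$-connected, then for any nonempty subset $S'\subset S$ the homomorphism $\rho^R_{S,S'}$ is injective. More particularly, for any nonempty subset $S'\subset\mathbb{N}$ the homomorphism $\rho^{\mathbb{Z}}_{\mathbb{N},S'}\colon \mathbb{Z}[q]^{\mathbb{N}}\to\mathbb{Z}[q]^{S'}$ is injective.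
   Context: All rings are commutative with unit; $q$ is an indeterminate. For $n\in\mathbb{N}$, $\Phi_n(q)\in\mathbb{Z}[q]$ is the $n$th cyclotomic polynomial. For $S\subset\mathbb{N}$, let $\Phi_S^*$ be the multiplicative subset of $\mathbb{Z}[q]$ generated by $\{\Phi_n(q): n\in S\}$, viewed as a directed set under divisibility, and define the cyclotomic completion $R[q]^S=\varprojlim_{f\in\Phi_S^*}R[q]/(f)$. For $S'\subset S$, $\rho^R_{S,S'}\colon R[q]^S\to R[q]^{S'}$ is the homomorphism induced by the identity of $R[q]$. A ring $R$ is $p$-adically separated if $\bigcap_{j\ge0}p^jR=(0)$. For $n,n'\in\mathbb{N}$ write $n\Leftrightarrow_R n'$ if either $n=n'$, or $n/n'$ is an integer power (positive or negative exponent) of a prime $p$ such that $R$ is $p$-adically separated, or $R=\{0\}$. A subset $S\subset\mathbb{N}$ is $\Leftrightarrow_R$-connected if it is nonempty and any two of its elements are joined by a finite chain of elements of $S$ consecutive ones of which are related by $\Leftrightarrow_R$. *)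

theory Defs
  imports Complex_Main "HOL-Computational_Algebra.Polynomial" "HOL-Library.Multiset"
begin

definition cyclotomic :: "nat \<Rightarrow> int poly" where
  "cyclotomic n = (THE p. (map_poly of_int p :: complex poly) =
      (\<Prod>k\<in>{k. k < n \<and> coprime k n}. [:- cis (2 * pi * real k / real n), 1:]))"

definition Phi_star :: "nat set \<Rightarrow> int poly set" where
  "Phi_star S = {prod_mset (image_mset cyclotomic M) | M. set_mset M \<subseteq> S}"

abbreviation to_R :: "int poly \<Rightarrow> 'a::comm_ring_1 poly" where
  "to_R f \<equiv> map_poly of_int f"

(* compatible families (a_f)_{f in Phi_S^*}, a_f in R[q] representing a class in R[q]/(f) *)
definition compatible :: "nat set \<Rightarrow> (int poly \<Rightarrow> 'a::comm_ring_1 poly) \<Rightarrow> bool" where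
  "compatible S a \<longleftrightarrow> (\<forall>f\<in>Phi_star S. \<forall>g\<in>Phi_star S. f dvd g \<longrightarrow> to_R f dvd (a g - a f))"

definition same_elt :: "nat set \<Rightarrow> (int poly \<Rightarrow> 'a::comm_ring_1 poly) \<Rightarrow> (int poly \<Rightarrow> 'a poly) \<Rightarrow> bool" where
  "same_elt S a b \<longleftrightarrow> (\<forall>f\<in>Phi_star S. to_R f dvd (a f - b f))"

(* the cyclotomic completion R[q]^S = lim_{f in Phi_S^*} R[q]/(f), as the set of
   compatible families modulo componentwise congruence *)
definition cyc_compl :: "nat set \<Rightarrow> (int poly \<Rightarrow> 'a::comm_ring_1 poly) set set" where
  "cyc_compl S = {{b. compatible S b \<and> same_elt S a b} | a. compatible S a}"

(* rho_{S,S'} : induced by the identity of R[q] (restriction of families) *)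
definition rho :: "nat set \<Rightarrow> nat set \<Rightarrow> (int poly \<Rightarrow> 'a::comm_ring_1 poly) set
                   \<Rightarrow> (int poly \<Rightarrow> 'a poly) set" where
  "rho S S' X = {b. compatible S' b \<and> (\<exists>a\<in>X. same_elt S' a b)}"

definition p_adically_separated :: "'a::comm_ring_1 itself \<Rightarrow> nat \<Rightarrow> bool" where
  "p_adically_separated (_ :: 'a itself) p \<longleftrightarrow>
     (\<forall>x::'a. (\<forall>j. (of_nat p) ^ j dvd x) \<longrightarrow> x = 0)"

definition equiv_R :: "'a::comm_ring_1 itself \<Rightarrow> nat \<Rightarrow> nat \<Rightarrow> bool" where
  "equiv_R R n n' \<longleftrightarrow> n = n'
     \<or> (\<exists>p k. prime p \<and> p_adically_separated R p \<and> (n = n' * p ^ k \<or> n' = n * p ^ k))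
     \<or> (UNIV :: 'a set) = {0}"

definition chain_in :: "'a::comm_ring_1 itself \<Rightarrow> nat set \<Rightarrow> nat list \<Rightarrow> bool" where
  "chain_in R S xs \<longleftrightarrow> xs \<noteq> [] \<and> set xs \<subseteq> S \<and>
     (\<forall>i. Suc i < length xs \<longrightarrow> equiv_R R (xs ! i) (xs ! Suc i))"

definition connected_R :: "'a::comm_ring_1 itself \<Rightarrow> nat set \<Rightarrow> bool" where
  "connected_R R S \<longleftrightarrow> S \<noteq> {} \<and>
     (\<forall>n\<in>S. \<forall>m\<in>S. \<exists>xs. chain_in R S xs \<and> hd xs = n \<and> last xs = m)"

end

theory Submission
  imports Defs "HOL-Computational_Algebra.Computational_Algebra"
begin

text \<open>
  Two points of \<open>R[q]\<^sup>S\<close> with the same image in \<open>R[q]\<^sup>S\<^sup>'\<close> differ by a compatible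
  family \<open>c\<close> that vanishes modulo every \<open>f \<in> \<Phi>\<^sup>*\<^sub>S\<^sub>'\<close>; we must show that it vanishes modulo every
  \<open>f \<in> \<Phi>\<^sup>*\<^sub>S\<close>. Vanishing spreads along one step \<open>n' \<Leftrightarrow>\<^sub>R n\<close> with \<open>n/n'\<close> a power of \<open>p\<close>: by
  Frobenius \<open>\<Phi>\<^sub>m(q\<^sup>p) \<equiv> \<Phi>\<^sub>m(q)\<^sup>p\<close> mod \<open>p\<close>, while \<open>\<Phi>\<^sub>m(q\<^sup>p)\<close> is \<open>\<Phi>\<^sub>m\<^sub>p\<close> or \<open>\<Phi>\<^sub>m\<^sub>p \<Phi>\<^sub>m\<close>, so a
  power of \<open>\<Phi>\<^sub>n\<^sub>'\<close> lies in \<open>(p, \<Phi>\<^sub>n)\<close> and hence, for all \<open>e, j\<close>, a power of \<open>\<Phi>\<^sub>n\<^sub>'\<close> lies in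
  \<open>(p\<^sup>j, \<Phi>\<^sub>n\<^sup>e)\<close>. Compatibility of \<open>c\<close> then puts \<open>c(g \<Phi>\<^sub>n\<^sup>e)\<close> into \<open>(p\<^sup>j, g \<Phi>\<^sub>n\<^sup>e)\<close> for every \<open>j\<close>,
  and since \<open>g \<Phi>\<^sub>n\<^sup>e\<close> is monic and \<open>R\<close> is \<open>p\<close>-adically separated, into \<open>(g \<Phi>\<^sub>n\<^sup>e)\<close>.
  Induction along chains and over the finitely many factors of \<open>f\<close> finishes the proof; over \<open>\<int>\<close>
  every \<open>n\<close> is linked to \<open>1\<close> through its prime factors.
\<close>

section \<open>Integer polynomials and division by monic polynomials\<close>

lemma to_R_add: "(to_R (f + g) :: 'a::comm_ring_1 poly) = to_R f + to_R g"
  by (rule poly_eqI) (simp add: coeff_map_poly)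

lemma to_R_diff: "(to_R (f - g) :: 'a::comm_ring_1 poly) = to_R f - to_R g"
  by (rule poly_eqI) (simp add: coeff_map_poly)

lemma to_R_mult: "(to_R (f * g) :: 'a::comm_ring_1 poly) = to_R f * to_R g"
  by (rule poly_eqI) (simp add: coeff_map_poly coeff_mult)

lemma to_R_power: "(to_R (f ^ n) :: 'a::comm_ring_1 poly) = to_R f ^ n"
  by (induction n) (simp_all add: to_R_mult)

lemma to_R_prod: "(to_R (prod f A) :: 'a::comm_ring_1 poly) = (\<Prod>x\<in>A. to_R (f x))"
  by (induction A rule: infinite_finite_induct) (simp_all add: to_R_mult)

lemma to_R_pcompose: "(to_R (pcompose f g) :: 'a::comm_ring_1 poly) = pcompose (to_R f) (to_R g)"
  by (induction f) (simp_all add: pcompose_pCons map_poly_pCons to_R_add to_R_mult)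

lemma lead_coeff_to_R:
  assumes "lead_coeff f = 1"
  shows "lead_coeff (to_R f :: 'a::comm_ring_1 poly) = 1"
proof (cases "(1::'a) = 0")
  case True
  have trivial: "x = 0" for x :: 'a
    using mult_1[of x] True by simp
  show ?thesis using trivial[of 1] trivial[of "lead_coeff (to_R f)"] by simp
qed (simp add: assms lead_coeff_map_poly_nz)

lemma to_C_inject: "(to_R f :: complex poly) = to_R g \<longleftrightarrow> f = g"
  by (metis coeff_map_poly of_int_0 of_int_eq_iff poly_eqI)

lemma degree_to_C [simp]: "degree (to_R f :: complex poly) = degree f"
  by (simp add: degree_map_poly)

lemma monic_divmod:
  fixes f g :: "'a::comm_ring_1 poly"
  assumes "lead_coeff g = 1"
  obtains q r where "f = g * q + r" "r = 0 \<or> degree r < degree g"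
proof (cases "g = 0")
  case True
  then have "(1::'a) = 0" using assms by simp
  then have "f = 0" by (metis smult_1_left smult_0_left)
  then show ?thesis using that[of 0 0] by simp
next
  case False
  obtain q r where "pseudo_divmod f g = (q, r)" by (cases "pseudo_divmod f g") auto
  from pseudo_divmod[OF False this] assms show ?thesis using that by auto
qed

lemma monic_mult_eq_small_imp_zero:
  fixes g d :: "'a::comm_ring_1 poly"
  assumes "lead_coeff g = 1" "g * d = s" "s = 0 \<or> degree s < degree g"
  shows "d = 0"
proof (rule ccontr)
  assume "d \<noteq> 0"
  then have "coeff s (degree g + degree d) \<noteq> 0"
    using assms(1,2) by (simp flip: assms(2) add: coeff_mult_degree_sum)
  then show False using assms(3) le_degree by fastforce
qed

lemma monic_remainder_unique:
  fixes g :: "'a::comm_ring_1 poly"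
  assumes "lead_coeff g = 1" "g * q1 + r1 = g * q2 + r2"
    and "r1 = 0 \<or> degree r1 < degree g" "r2 = 0 \<or> degree r2 < degree g"
  shows "r1 = r2"
proof -
  have "r2 - r1 = 0 \<or> degree (r2 - r1) < degree g"
    using assms(3,4) degree_diff_le_max[of r2 r1] by auto
  moreover have "g * (q1 - q2) = r2 - r1" using assms(2) by (simp add: algebra_simps)
  ultimately have "q1 - q2 = 0" using monic_mult_eq_small_imp_zero[OF assms(1)] by blast
  then show ?thesis using assms(2) by simp
qed

lemma monic_dvd_if_dvd_modulo_powers:
  fixes F h :: "'a::comm_ring_1 poly"
  assumes mon: "lead_coeff F = 1"
    and sep: "\<And>x::'a. (\<forall>j. c ^ j dvd x) \<Longrightarrow> x = 0"
    and H: "\<And>j. \<exists>u z. h = F * u + smult (c ^ j) z"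
  shows "F dvd h"
proof -
  obtain q r where qr: "h = F * q + r" and r: "r = 0 \<or> degree r < degree F"
    using monic_divmod[OF mon] by blast
  have "c ^ j dvd coeff r i" for i j
  proof -
    txt \<open>By uniqueness of remainders, \<open>r\<close> is \<open>c\<^sup>j\<close> times the remainder of \<open>z\<close>.\<close>
    obtain u z where uz: "h = F * u + smult (c ^ j) z" using H by blast
    obtain q' r' where qr': "z = F * q' + r'" and r': "r' = 0 \<or> degree r' < degree F"
      using monic_divmod[OF mon] by blast
    have "F * q + r = F * (u + smult (c ^ j) q') + smult (c ^ j) r'"
      using qr uz qr' by (simp add: algebra_simps smult_add_right)
    moreover have "smult (c ^ j) r' = 0 \<or> degree (smult (c ^ j) r') < degree F"
      using r' degree_smult_le[of "c ^ j" r'] by auto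
    ultimately have "r = smult (c ^ j) r'" using monic_remainder_unique[OF mon _ r] by blast
    then show ?thesis by simp
  qed
  then have "r = 0" using sep by (simp add: poly_eqI)
  then show ?thesis using qr by simp
qed

section \<open>Cyclotomic polynomials\<close>

definition prim_roots :: "nat \<Rightarrow> complex set" where
  "prim_roots n = {z. z ^ n = 1 \<and> (\<forall>j. z ^ j = 1 \<longrightarrow> n dvd j)}"

definition cyclotomic_C :: "nat \<Rightarrow> complex poly" where
  "cyclotomic_C n = (\<Prod>z\<in>prim_roots n. [:-z, 1:])"

lemma prim_roots_power_eq_1_iff: "z \<in> prim_roots d \<Longrightarrow> z ^ j = 1 \<longleftrightarrow> d dvd j"
  unfolding prim_roots_def by (auto simp: power_mult)

lemma prim_roots_disjoint: "d \<noteq> d' \<Longrightarrow> prim_roots d \<inter> prim_roots d' = {}"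
  unfolding prim_roots_def by (auto intro: dvd_antisym)

lemma finite_prim_roots: "d > 0 \<Longrightarrow> finite (prim_roots d)"
  by (rule finite_subset[of _ "{z. z ^ d = 1}"]) (auto simp: prim_roots_def intro: finite_roots_unity)

lemma lead_coeff_cyclotomic_C: "lead_coeff (cyclotomic_C n) = 1"
  unfolding cyclotomic_C_def lead_coeff_prod by simp

lemma root_of_unity_in_prim_roots:
  fixes z :: complex
  assumes "n > 0" "z ^ n = 1"
  obtains d where "d dvd n" "z \<in> prim_roots d"
proof -
  define d where "d = (LEAST d. 0 < d \<and> z ^ d = 1)"
  have d: "0 < d" "z ^ d = 1"
    using LeastI[of "\<lambda>d. 0 < d \<and> z ^ d = 1" n] assms by (auto simp: d_def)
  have "d dvd j" if "z ^ j = 1" for j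
  proof -
    have "z ^ (j mod d) = 1"
      using that d(2) by (metis mod_div_mult_eq power_add power_mult power_one mult.commute mult_1)
    moreover have "d \<le> j mod d" if "0 < j mod d" "z ^ (j mod d) = 1"
      using that Least_le[of "\<lambda>d. 0 < d \<and> z ^ d = 1"] by (simp add: d_def)
    ultimately have "j mod d = 0" using d(1) by (meson mod_less_divisor not_gr0 not_le)
    then show ?thesis by (simp add: mod_eq_0_iff_dvd)
  qed
  then show ?thesis using that d assms(2) by (auto simp: prim_roots_def)
qed

lemma monom_minus_const_eq_prod:
  assumes "n > 0" "c \<noteq> 0"
  shows "monom 1 n - [:c:] = (\<Prod>z\<in>{z::complex. z ^ n = c}. [:-z, 1:])"
proof -
  let ?p = "monom 1 n - [:c:] :: complex poly"
  have "?p = [:-c:] + monom 1 n" by simp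
  also have "lead_coeff \<dots> = 1"
    using assms by (subst lead_coeff_add_le) (simp_all add: degree_monom_eq)
  finally have lc: "lead_coeff ?p = 1" .
  have "rsquarefree ?p"
  proof (subst rsquarefree_roots, intro allI notI)
    fix a assume a: "poly ?p a = 0 \<and> poly (pderiv ?p) a = 0"
    have "pderiv ?p = monom (of_nat n) (n - 1)" by (simp add: pderiv_diff pderiv_monom)
    then have "a = 0" using a assms by (simp add: poly_monom)
    then show False using a assms by (simp add: poly_monom power_0_left)
  qed
  from complex_poly_decompose_rsquarefree[OF this] lc
  have "?p = (\<Prod>z | poly ?p z = 0. [:-z, 1:])" by simp
  then show ?thesis by (simp add: poly_monom)
qed

lemma monom_minus_1_eq_prod_cyclotomic_C:
  assumes "n > 0"
  shows "monom 1 n - 1 = (\<Prod>d | d dvd n. cyclotomic_C d)"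
proof -
  have roots: "{z::complex. z ^ n = 1} = (\<Union>d\<in>{d. d dvd n}. prim_roots d)"
    using root_of_unity_in_prim_roots[OF assms] prim_roots_power_eq_1_iff by blast
  have "monom 1 n - 1 = (\<Prod>z\<in>{z::complex. z ^ n = 1}. [:-z, 1:])"
    using monom_minus_const_eq_prod[OF assms, of 1] by (simp add: one_pCons)
  also have "\<dots> = (\<Prod>d | d dvd n. cyclotomic_C d)"
    unfolding roots cyclotomic_C_def using assms
    by (intro prod.UNION_disjoint)
       (auto simp: prim_roots_disjoint finite_prim_roots dvd_pos_nat)
  finally show ?thesis .
qed

lemma coprime_iff_dvd_mult_cancel:
  fixes k n :: nat
  assumes "n > 0"
  shows "coprime k n \<longleftrightarrow> (\<forall>j. n dvd k * j \<longrightarrow> n dvd j)"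
proof
  assume "coprime k n"
  then show "\<forall>j. n dvd k * j \<longrightarrow> n dvd j" by (simp add: coprime_commute coprime_dvd_mult_right_iff)
next
  assume cancel: "\<forall>j. n dvd k * j \<longrightarrow> n dvd j"
  define g where "g = gcd k n"
  have "g > 0" using assms by (simp add: g_def)
  have "k * (n div g) = (k div g) * n" by (simp add: g_def div_mult_swap dvd_div_mult)
  then have "n dvd n div g" using cancel by (metis dvd_triv_right)
  moreover have "n div g > 0" using assms by (simp add: g_def div_greater_zero_iff)
  ultimately have "n \<le> n div g" by (rule dvd_imp_le)
  then have "g = 1" using div_less_dividend[of g n] assms \<open>g > 0\<close> by linarith
  then show "coprime k n" by (simp add: g_def coprime_iff_gcd_eq_1)
qed

lemma cis_power_eq_1_iff:
  assumes "n > 0"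
  shows "cis (2 * pi / real n) ^ m = 1 \<longleftrightarrow> n dvd m"
proof -
  define \<omega> where "\<omega> = cis (2 * pi / real n)"
  have pk: "cis (2 * pi * real k / real n) = \<omega> ^ k" for k
    by (simp add: \<omega>_def DeMoivre mult_ac)
  have inj: "inj_on (\<lambda>k. \<omega> ^ k) {..<n}"
    using bij_betw_roots_unity[OF assms] by (simp add: bij_betw_def pk)
  have "\<omega> ^ n = 1" using pk[of n] assms by simp
  then have "\<omega> ^ m = \<omega> ^ (m mod n)"
    by (metis mod_div_mult_eq power_add power_mult power_one mult.commute mult_1)
  also have "\<dots> = 1 \<longleftrightarrow> m mod n = 0"
    using inj_onD[OF inj, of "m mod n" 0] assms by auto
  finally show ?thesis by (simp add: \<omega>_def mod_eq_0_iff_dvd)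
qed

lemma prod_primitive_cis_eq_cyclotomic_C:
  assumes n: "n > 0"
  shows "(\<Prod>k\<in>{k. k < n \<and> coprime k n}. [:- cis (2 * pi * real k / real n), 1:]) = cyclotomic_C n"
proof -
  define \<omega> where "\<omega> = cis (2 * pi / real n)"
  have pk: "cis (2 * pi * real k / real n) = \<omega> ^ k" for k
    by (simp add: \<omega>_def DeMoivre mult_ac)
  have bij: "bij_betw (\<lambda>k. \<omega> ^ k) {..<n} {z. z ^ n = 1}"
    using bij_betw_roots_unity[OF n] by (simp add: pk)
  have prim: "\<omega> ^ k \<in> prim_roots n \<longleftrightarrow> coprime k n" for k
    using cis_power_eq_1_iff[OF n] coprime_iff_dvd_mult_cancel[OF n]
    by (simp add: prim_roots_def \<omega>_def flip: power_mult)
  have "bij_betw (\<lambda>k. \<omega> ^ k) {k. k < n \<and> coprime k n} (prim_roots n)"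
  proof (rule bij_betw_subset[OF bij])
    have "z \<in> (\<lambda>k. \<omega> ^ k) ` {..<n}" if "z \<in> prim_roots n" for z
      using that bij by (auto simp: bij_betw_def prim_roots_def)
    then show "(\<lambda>k. \<omega> ^ k) ` {k. k < n \<and> coprime k n} = prim_roots n" using prim by auto
  qed auto
  then have "(\<Prod>k\<in>{k. k < n \<and> coprime k n}. [:- (\<omega> ^ k), 1:]) = (\<Prod>z\<in>prim_roots n. [:-z, 1:])"
    by (rule prod.reindex_bij_betw)
  then show ?thesis by (simp add: pk cyclotomic_C_def)
qed

text \<open>\<open>\<Phi>\<^sub>n = (q\<^sup>n - 1) / \<Prod>\<^bsub>d | n, d < n\<^esub> \<Phi>\<^sub>d\<close>, and dividing by a monic integer polynomial stays in \<open>\<int>[q]\<close>.\<close>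

lemma cyclotomic_C_integral:
  assumes "n > 0"
  obtains P where "(to_R P :: complex poly) = cyclotomic_C n"
  using assms
proof (induction n arbitrary: thesis rule: less_induct)
  case (less n)
  define D where "D = {d. d dvd n \<and> d < n}"
  have "\<forall>d\<in>D. \<exists>P. (to_R P :: complex poly) = cyclotomic_C d"
    using less.IH less.prems(2) by (metis D_def dvd_pos_nat mem_Collect_eq)
  then obtain P where P: "\<And>d. d \<in> D \<Longrightarrow> (to_R (P d) :: complex poly) = cyclotomic_C d" by metis
  define Q where "Q = (\<Prod>d\<in>D. P d)"
  have Q: "(to_R Q :: complex poly) = (\<Prod>d\<in>D. cyclotomic_C d)"
    unfolding Q_def to_R_prod by (simp add: P)
  then have lcQC: "lead_coeff (to_R Q :: complex poly) = 1"
    by (simp add: lead_coeff_prod lead_coeff_cyclotomic_C)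
  then have lcQ: "lead_coeff Q = 1" by (simp add: coeff_map_poly)
  have "{d. d dvd n} = insert n D" using less.prems(2) by (auto simp: D_def dvd_imp_le le_less)
  then have "monom 1 n - 1 = cyclotomic_C n * to_R Q"
    using monom_minus_1_eq_prod_cyclotomic_C[OF less.prems(2)] by (simp add: Q D_def)
  moreover obtain u r where ur: "monom 1 n - 1 = Q * u + r" and r: "r = 0 \<or> degree r < degree Q"
    using monic_divmod[OF lcQ] by blast
  moreover have "(to_R (monom 1 n - 1) :: complex poly) = monom 1 n - 1"
    by (simp add: to_R_diff map_poly_monom)
  ultimately have "to_R Q * (cyclotomic_C n - to_R u) = (to_R r :: complex poly)"
    by (simp add: to_R_add to_R_mult algebra_simps)
  moreover have "(to_R r :: complex poly) = 0 \<or> degree (to_R r :: complex poly) < degree (to_R Q :: complex poly)"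
    using r by auto
  ultimately have "to_R u = cyclotomic_C n" by (metis monic_mult_eq_small_imp_zero[OF lcQC] eq_iff_diff_eq_0)
  then show ?case by (rule less.prems(1))
qed

lemma to_C_cyclotomic:
  assumes "n > 0"
  shows "(to_R (cyclotomic n) :: complex poly) = cyclotomic_C n"
proof -
  obtain P where P: "(to_R P :: complex poly) = cyclotomic_C n" using cyclotomic_C_integral[OF assms] .
  have "cyclotomic n = P"
    unfolding cyclotomic_def prod_primitive_cis_eq_cyclotomic_C[OF assms]
    by (rule the_equality) (simp_all add: P flip: to_C_inject)
  then show ?thesis using P by simp
qed

lemma lead_coeff_cyclotomic: "n > 0 \<Longrightarrow> lead_coeff (cyclotomic n) = 1"
proof -
  assume "n > 0"
  then have "coeff (to_R (cyclotomic n) :: complex poly) (degree (cyclotomic n)) = 1"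
    using to_C_cyclotomic[of n] lead_coeff_cyclotomic_C[of n] by (metis degree_to_C)
  then show ?thesis by (simp add: coeff_map_poly)
qed

lemma prim_roots_pth_power_preimage:
  assumes p: "prime p" and m: "m > 0"
  shows "{x. x ^ p \<in> prim_roots m} = prim_roots (m * p) \<union> (if p dvd m then {} else prim_roots m)"
proof -
  have p1: "p > 1" using p prime_gt_1_nat by blast
  have pth_power: "(x ^ p) ^ j = 1 \<longleftrightarrow> d dvd p * j" if "x \<in> prim_roots d" for x d j
    using prim_roots_power_eq_1_iff[OF that] by (simp flip: power_mult)
  have "x ^ p \<in> prim_roots m" if "x \<in> prim_roots (m * p)" for x
    using pth_power[OF that] p1 by (simp add: prim_roots_def mult.commute)
  moreover have "x ^ p \<in> prim_roots m" if "x \<in> prim_roots m" "\<not> p dvd m" for x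
    using pth_power[OF that(1)] prime_imp_coprime[OF p that(2)]
    by (simp add: prim_roots_def coprime_commute coprime_dvd_mult_right_iff)
  moreover have "x \<in> prim_roots (m * p) \<or> x \<in> prim_roots m \<and> \<not> p dvd m"
    if x: "x ^ p \<in> prim_roots m" for x
  proof -
    have "x ^ (p * m) = 1" using x by (simp add: prim_roots_def power_mult)
    then obtain d where d: "d dvd p * m" "x \<in> prim_roots d"
      using root_of_unity_in_prim_roots[of "p * m" x] p1 m by auto
    have order: "d dvd p * j \<longleftrightarrow> m dvd j" for j
      using pth_power[OF d(2)] prim_roots_power_eq_1_iff[OF x] by simp
    obtain t where t: "d = m * t" using order[of d] by auto
    then have "t dvd p" using d(1) m by (simp add: mult.commute)
    then have "t = 1 \<or> t = p" using p by (simp add: prime_nat_iff)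
    moreover have "\<not> p dvd m" if "t = 1"
    proof
      assume "p dvd m"
      then obtain s where s: "m = p * s" by auto
      then have "m dvd s" using order[of s] t that by simp
      then show False using s m p1 by (simp add: nat_dvd_not_less)
    qed
    ultimately show ?thesis using d t by auto
  qed
  ultimately show ?thesis by auto
qed

lemma cyclotomic_C_pcompose_monom:
  assumes p: "p > 0" and m: "m > 0"
  shows "pcompose (cyclotomic_C m) (monom 1 p) = (\<Prod>x\<in>{x. x ^ p \<in> prim_roots m}. [:-x, 1:])"
proof -
  have nonzero: "\<eta> \<noteq> 0" if "\<eta> \<in> prim_roots m" for \<eta>
    using that m by (auto simp: prim_roots_def power_0_left)
  have "pcompose (cyclotomic_C m) (monom 1 p) = (\<Prod>\<eta>\<in>prim_roots m. monom 1 p - [:\<eta>:])"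
    unfolding cyclotomic_C_def pcompose_prod
    by (rule prod.cong) (simp_all add: pcompose_pCons algebra_simps)
  also have "\<dots> = (\<Prod>\<eta>\<in>prim_roots m. \<Prod>x\<in>{x. x ^ p = \<eta>}. [:-x, 1:])"
    by (rule prod.cong) (simp_all add: monom_minus_const_eq_prod[OF p] nonzero)
  also have "\<dots> = (\<Prod>x\<in>(\<Union>\<eta>\<in>prim_roots m. {x. x ^ p = \<eta>}). [:-x, 1:])"
    using p by (intro prod.UNION_disjoint[symmetric]) (auto simp: finite_prim_roots[OF m] finite_nth_roots)
  also have "(\<Union>\<eta>\<in>prim_roots m. {x. x ^ p = \<eta>}) = {x. x ^ p \<in> prim_roots m}" by blast
  finally show ?thesis .
qed

lemma cyclotomic_pcompose_monom_prime:
  assumes p: "prime p" and m: "m > 0"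
  shows "pcompose (cyclotomic m) (monom 1 p) =
    (if p dvd m then cyclotomic (m * p) else cyclotomic (m * p) * cyclotomic m)"
proof -
  have p1: "p > 1" using p prime_gt_1_nat by blast
  have "(\<Prod>x\<in>prim_roots (m * p) \<union> prim_roots m. [:-x, 1:]) = cyclotomic_C (m * p) * cyclotomic_C m"
    unfolding cyclotomic_C_def using m p1
    by (intro prod.union_disjoint) (auto simp: finite_prim_roots prim_roots_disjoint)
  then show ?thesis
    using m p1
    by (simp add: to_R_pcompose map_poly_monom to_R_mult to_C_cyclotomic cyclotomic_C_pcompose_monom
        prim_roots_pth_power_preimage[OF p m] flip: to_C_inject)
       (simp add: cyclotomic_C_def)
qed

section \<open>Cyclotomic polynomials modulo a prime\<close>

definition cong_modp :: "nat \<Rightarrow> int poly \<Rightarrow> int poly \<Rightarrow> bool" where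
  "cong_modp p A B \<longleftrightarrow> [:int p:] dvd A - B"

lemma cong_modp_refl: "cong_modp p A A"
  by (simp add: cong_modp_def)

lemma cong_modp_sym: "cong_modp p A B \<Longrightarrow> cong_modp p B A"
  unfolding cong_modp_def by (metis dvd_minus_iff minus_diff_eq)

lemma cong_modp_trans: "cong_modp p A B \<Longrightarrow> cong_modp p B C \<Longrightarrow> cong_modp p A C"
  unfolding cong_modp_def using dvd_add[of "[:int p:]" "A - B" "B - C"] by simp

lemma cong_modp_add: "cong_modp p A B \<Longrightarrow> cong_modp p C D \<Longrightarrow> cong_modp p (A + C) (B + D)"
  unfolding cong_modp_def using dvd_add[of "[:int p:]" "A - B" "C - D"] by (simp add: add_diff_add)

lemma cong_modp_mult: "cong_modp p A B \<Longrightarrow> cong_modp p C D \<Longrightarrow> cong_modp p (A * C) (B * D)"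
proof -
  assume "cong_modp p A B" "cong_modp p C D"
  then have "[:int p:] dvd (A - B) * C + B * (C - D)" unfolding cong_modp_def by simp
  then show ?thesis unfolding cong_modp_def by (simp add: algebra_simps)
qed

lemma cong_modp_power: "cong_modp p A B \<Longrightarrow> cong_modp p (A ^ n) (B ^ n)"
  by (induction n) (simp_all add: cong_modp_refl cong_modp_mult)

lemma cong_modp_iff: "cong_modp p A B \<longleftrightarrow> (\<exists>w. A = B + [:int p:] * w)"
  unfolding cong_modp_def dvd_def by (metis add_diff_cancel_left' diff_add_cancel)

lemma add_power_prime_eq:
  fixes x y :: "'a::comm_ring_1"
  assumes p: "prime p"
  obtains w where "(x + y) ^ p = x ^ p + y ^ p + of_nat p * w"
proof -
  have p0: "p > 0" using p prime_gt_0_nat by blast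
  have middle: "of_nat (p choose k) = (of_nat p * of_nat ((p choose k) div p) :: 'a)"
    if "k \<in> {1..<p}" for k
    using dvd_choose_prime[of k p] that p by (simp flip: of_nat_mult)
  have "{..p} = insert 0 (insert p {1..<p})" using p0 by auto
  then have "(x + y) ^ p = (\<Sum>k\<in>insert 0 (insert p {1..<p}). of_nat (p choose k) * x ^ k * y ^ (p - k))"
    by (simp add: binomial_ring)
  also have "\<dots> = y ^ p + x ^ p + of_nat p *
      (\<Sum>k\<in>{1..<p}. of_nat ((p choose k) div p) * x ^ k * y ^ (p - k))"
    using p0 by (simp add: sum_distrib_left middle mult_ac)
  finally show ?thesis using that by (simp add: add_ac)
qed

lemma prime_dvd_power_minus_self_int:
  assumes p: "prime p"
  shows "int p dvd a ^ p - a"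
proof (induction a rule: int_induct[where k = 0])
  case base
  show ?case using p prime_gt_0_nat by (simp add: power_0_left)
next
  case (step1 i)
  obtain w where "(i + 1) ^ p = i ^ p + 1 ^ p + of_nat p * w" using add_power_prime_eq[OF p] .
  then have "(i + 1) ^ p - (i + 1) = (i ^ p - i) + int p * w" by simp
  moreover have "int p dvd (i ^ p - i) + int p * w" by (rule dvd_add[OF step1(2)]) simp
  ultimately show ?case by metis
next
  case (step2 i)
  obtain w where "(i - 1 + 1) ^ p = (i - 1) ^ p + 1 ^ p + of_nat p * w" using add_power_prime_eq[OF p] .
  then have "(i - 1) ^ p - (i - 1) = (i ^ p - i) - int p * w" by simp
  moreover have "int p dvd (i ^ p - i) - int p * w" by (rule dvd_diff[OF step2(2)]) simp
  ultimately show ?case by metis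
qed

lemma pcompose_monom_prime_cong_power:
  assumes p: "prime p"
  shows "cong_modp p (pcompose f (monom 1 p)) (f ^ p)"
proof (induction f)
  case 0
  show ?case using p prime_gt_0_nat by (simp add: cong_modp_refl power_0_left)
next
  case (pCons a f)
  have X: "pCons a f = [:a:] + [:0, 1:] * f" by simp
  have "cong_modp p [:a:] [:a ^ p:]"
    using prime_dvd_power_minus_self_int[OF p, of a] by (simp add: cong_modp_def dvd_diff_commute)
  then have "cong_modp p (pcompose (pCons a f) (monom 1 p)) ([:a ^ p:] + monom 1 p * f ^ p)"
    using pCons.IH by (simp add: pcompose_pCons cong_modp_add cong_modp_mult cong_modp_refl)
  moreover obtain w where w: "(pCons a f) ^ p = [:a:] ^ p + ([:0, 1:] * f) ^ p + of_nat p * w"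
    using add_power_prime_eq[OF p, of "[:a:]" "[:0, 1:] * f"] by (metis X)
  have "[:a:] ^ p + ([:0, 1:] * f) ^ p = [:a ^ p:] + monom 1 p * f ^ p"
    by (simp only: power_mult_distrib poly_const_pow) (simp add: monom_altdef)
  then have "cong_modp p ((pCons a f) ^ p) ([:a ^ p:] + monom 1 p * f ^ p)"
    unfolding cong_modp_iff w by (intro exI[of _ w]) (simp add: of_nat_poly)
  ultimately show ?case using cong_modp_sym cong_modp_trans by blast
qed

lemma cong_modp_cancel_monic:
  assumes p: "prime p" and f: "lead_coeff f = 1" and h: "cong_modp p (f * X) (f * Y)"
  shows "cong_modp p X Y"
proof -
  have "prime_elem [:int p:]"
    using p by (simp add: lift_prime_elem_poly prime_imp_prime_elem)
  moreover have "\<not> [:int p:] dvd f"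
  proof
    assume "[:int p:] dvd f"
    then have "int p dvd coeff f (degree f)" by (simp add: const_poly_dvd_iff)
    then show False using f p by simp
  qed
  moreover have "[:int p:] dvd f * (X - Y)" using h by (simp add: cong_modp_def algebra_simps)
  ultimately show ?thesis by (simp add: cong_modp_def prime_elem_dvd_mult_iff)
qed

definition cyclotomic_in_radical :: "nat \<Rightarrow> nat \<Rightarrow> nat \<Rightarrow> bool" where
  "cyclotomic_in_radical p a b \<longleftrightarrow> (\<exists>k t. cong_modp p (cyclotomic a ^ k) (cyclotomic b * t))"

lemma cyclotomic_in_radical_refl: "cyclotomic_in_radical p a a"
  unfolding cyclotomic_in_radical_def by (metis cong_modp_refl mult.right_neutral power_one_right)

lemma cyclotomic_in_radical_trans:
  assumes "cyclotomic_in_radical p a b" "cyclotomic_in_radical p b c"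
  shows "cyclotomic_in_radical p a c"
proof -
  obtain k t where kt: "cong_modp p (cyclotomic a ^ k) (cyclotomic b * t)"
    using assms(1) by (auto simp: cyclotomic_in_radical_def)
  obtain l s where ls: "cong_modp p (cyclotomic b ^ l) (cyclotomic c * s)"
    using assms(2) by (auto simp: cyclotomic_in_radical_def)
  have "cong_modp p (cyclotomic a ^ (k * l)) (cyclotomic b ^ l * t ^ l)"
    using cong_modp_power[OF kt, of l] by (simp add: power_mult power_mult_distrib)
  moreover have "cong_modp p (cyclotomic b ^ l * t ^ l) (cyclotomic c * (s * t ^ l))"
    using cong_modp_mult[OF ls cong_modp_refl] by (simp add: mult.assoc)
  ultimately show ?thesis unfolding cyclotomic_in_radical_def by (blast intro: cong_modp_trans)
qed

lemma cyclotomic_in_radical_mult_prime: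
  assumes p: "prime p" and m: "m > 0"
  shows "cyclotomic_in_radical p m (m * p) \<and> cyclotomic_in_radical p (m * p) m"
proof -
  have p1: "p > 1" using p prime_gt_1_nat by blast
  have frobenius: "cong_modp p (pcompose (cyclotomic m) (monom 1 p)) (cyclotomic m ^ p)"
    by (rule pcompose_monom_prime_cong_power[OF p])
  have power_p: "cyclotomic m ^ p = cyclotomic m * cyclotomic m ^ (p - 1)"
    using p1 by (simp flip: power_Suc)
  show ?thesis
  proof (cases "p dvd m")
    case True
    then have "cong_modp p (cyclotomic (m * p) ^ 1) (cyclotomic m * cyclotomic m ^ (p - 1))"
      using frobenius cyclotomic_pcompose_monom_prime[OF p m] power_p by simp
    moreover from this have "cong_modp p (cyclotomic m ^ p) (cyclotomic (m * p) * 1)"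
      using power_p by (simp add: cong_modp_sym)
    ultimately show ?thesis unfolding cyclotomic_in_radical_def by blast
  next
    case False
    then have "cong_modp p (cyclotomic m * cyclotomic (m * p)) (cyclotomic m * cyclotomic m ^ (p - 1))"
      using frobenius cyclotomic_pcompose_monom_prime[OF p m] power_p by (simp add: mult.commute)
    then have "cong_modp p (cyclotomic (m * p)) (cyclotomic m ^ (p - 1))"
      by (rule cong_modp_cancel_monic[OF p lead_coeff_cyclotomic[OF m]])
    moreover have "p - 1 = Suc (p - 2)" using p1 by simp
    ultimately have "cong_modp p (cyclotomic (m * p) ^ 1) (cyclotomic m * cyclotomic m ^ (p - 2))"
      by simp
    moreover from \<open>cong_modp p (cyclotomic m * _) _\<close> have
      "cong_modp p (cyclotomic m ^ p) (cyclotomic (m * p) * cyclotomic m)"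
      using power_p by (simp add: cong_modp_sym mult.commute)
    ultimately show ?thesis unfolding cyclotomic_in_radical_def by blast
  qed
qed

lemma cyclotomic_in_radical_mult_prime_power:
  assumes p: "prime p" and m: "m > 0"
  shows "cyclotomic_in_radical p m (m * p ^ k) \<and> cyclotomic_in_radical p (m * p ^ k) m"
proof (induction k)
  case 0
  then show ?case by (simp add: cyclotomic_in_radical_refl)
next
  case (Suc k)
  have "m * p ^ k > 0" using m p prime_gt_0_nat by simp
  from cyclotomic_in_radical_mult_prime[OF p this] Suc show ?case
    by (auto simp: mult_ac intro: cyclotomic_in_radical_trans)
qed

section \<open>Vanishing of compatible families\<close>

lemma power_add_split:
  fixes u v :: "'a::comm_semiring_1"
  obtains A B where "(u + v) ^ (i + l) = u ^ i * A + v ^ l * B"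
proof -
  let ?f = "\<lambda>k. of_nat ((i + l) choose k) * u ^ k * v ^ (i + l - k)"
  have "{..i + l} = {i..i + l} \<union> {..<i}" by auto
  then have "(u + v) ^ (i + l) = (\<Sum>k\<in>{i..i + l} \<union> {..<i}. ?f k)"
    by (simp add: binomial_ring)
  also have "\<dots> = (\<Sum>k=i..i + l. ?f k) + (\<Sum>k<i. ?f k)"
    by (rule sum.union_disjoint) auto
  also have "(\<Sum>k=i..i + l. ?f k) = u ^ i * (\<Sum>k=i..i + l. of_nat ((i + l) choose k) * u ^ (k - i) * v ^ (i + l - k))"
    unfolding sum_distrib_left
  proof (rule sum.cong)
    fix k assume "k \<in> {i..i + l}"
    then have "u ^ k = u ^ i * u ^ (k - i)" by (simp flip: power_add)
    then show "?f k = u ^ i * (of_nat ((i + l) choose k) * u ^ (k - i) * v ^ (i + l - k))"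
      by (simp add: mult_ac)
  qed simp
  also have "(\<Sum>k<i. ?f k) = v ^ l * (\<Sum>k<i. of_nat ((i + l) choose k) * u ^ k * v ^ (i - k))"
    unfolding sum_distrib_left
  proof (rule sum.cong)
    fix k assume "k \<in> {..<i}"
    then have "v ^ (i + l - k) = v ^ l * v ^ (i - k)" by (simp add: add.commute flip: power_add)
    then show "?f k = v ^ l * (of_nat ((i + l) choose k) * u ^ k * v ^ (i - k))"
      by (simp add: mult_ac)
  qed simp
  finally show ?thesis by (rule that)
qed

lemma power_in_ideal_of_powers:
  fixes x u v :: "'a::comm_semiring_1"
  assumes "x ^ b = u * t + v * w"
  obtains A B where "x ^ (b * (e + j)) = u ^ e * A + v ^ j * B"
proof -
  obtain A B where "(u * t + v * w) ^ (e + j) = (u * t) ^ e * A + (v * w) ^ j * B"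
    using power_add_split .
  then have "x ^ (b * (e + j)) = u ^ e * (t ^ e * A) + v ^ j * (w ^ j * B)"
    by (simp add: power_mult assms power_mult_distrib mult_ac)
  then show ?thesis by (rule that)
qed

lemma Phi_star_mult:
  assumes "f \<in> Phi_star T" "g \<in> Phi_star T"
  shows "f * g \<in> Phi_star T"
proof -
  obtain M N where "f = prod_mset (image_mset cyclotomic M)" "set_mset M \<subseteq> T"
    "g = prod_mset (image_mset cyclotomic N)" "set_mset N \<subseteq> T"
    using assms by (auto simp: Phi_star_def)
  then show ?thesis unfolding Phi_star_def by (intro CollectI exI[of _ "M + N"]) auto
qed

lemma cyclotomic_power_in_Phi_star: "n \<in> T \<Longrightarrow> cyclotomic n ^ e \<in> Phi_star T"
  unfolding Phi_star_def by (intro CollectI exI[of _ "replicate_mset e n"]) auto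

lemma Phi_star_mono: "T \<subseteq> S \<Longrightarrow> Phi_star T \<subseteq> Phi_star S"
  unfolding Phi_star_def by blast

lemma lead_coeff_Phi_star:
  assumes "0 \<notin> T" "f \<in> Phi_star T"
  shows "lead_coeff f = 1"
proof -
  obtain M where "f = prod_mset (image_mset cyclotomic M)" "set_mset M \<subseteq> T"
    using assms(2) by (auto simp: Phi_star_def)
  moreover have "n > 0" if "n \<in> T" for n using assms(1) that by (metis gr0I)
  ultimately show ?thesis
    by (induction M arbitrary: f) (auto simp: lead_coeff_mult lead_coeff_cyclotomic)
qed

lemma Phi_star_insert_elim:
  assumes "f \<in> Phi_star (insert n T)"
  obtains g e where "g \<in> Phi_star T" "f = g * cyclotomic n ^ e"
proof -
  obtain M where M: "f = prod_mset (image_mset cyclotomic M)" "set_mset M \<subseteq> insert n T"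
    using assms by (auto simp: Phi_star_def)
  define M' where "M' = filter_mset (\<lambda>x. x \<noteq> n) M"
  have "M = M' + replicate_mset (count M n) n"
    unfolding M'_def by (metis filter_eq_replicate_mset multiset_partition union_commute)
  then have "f = prod_mset (image_mset cyclotomic M') * cyclotomic n ^ count M n"
    using M(1) by (metis image_mset_union prod_mset.union image_replicate_mset prod_mset_replicate_mset)
  moreover have "prod_mset (image_mset cyclotomic M') \<in> Phi_star T"
    using M(2) unfolding Phi_star_def by (intro CollectI exI[of _ M']) (auto simp: M'_def)
  ultimately show ?thesis using that by blast
qed

lemma Phi_star_finite_support:
  assumes "f \<in> Phi_star S"
  obtains A where "finite A" "A \<subseteq> S" "f \<in> Phi_star A"
  using assms unfolding Phi_star_def by blast

definition vanishes_on :: "nat set \<Rightarrow> (int poly \<Rightarrow> 'a::comm_ring_1 poly) \<Rightarrow> bool" where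
  "vanishes_on T c \<longleftrightarrow> (\<forall>f\<in>Phi_star T. to_R f dvd c f)"

lemma vanishes_on_subset: "vanishes_on T c \<Longrightarrow> T' \<subseteq> T \<Longrightarrow> vanishes_on T' c"
  unfolding vanishes_on_def using Phi_star_mono by blast

lemma vanishes_on_if_finite_subsets:
  "(\<And>A. finite A \<Longrightarrow> A \<subseteq> S \<Longrightarrow> vanishes_on A c) \<Longrightarrow> vanishes_on S c"
  unfolding vanishes_on_def by (metis Phi_star_finite_support)

lemma vanishes_on_trivial_ring:
  assumes "(UNIV :: 'a::comm_ring_1 set) = {0}"
  shows "vanishes_on T (c :: int poly \<Rightarrow> 'a poly)"
proof -
  have "(1::'a) = 0" using assms by blast
  then have "c f = 0" for f using smult_1_left[of "c f"] by simp
  then show ?thesis by (simp add: vanishes_on_def)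
qed

lemma vanishes_on_insert:
  fixes c :: "int poly \<Rightarrow> 'a::comm_ring_1 poly"
  assumes comp: "compatible S c" and TS: "T \<subseteq> S" and nS: "n \<in> S" and S0: "0 \<notin> S"
    and n'T: "n' \<in> T" and sep: "p_adically_separated TYPE('a) p"
    and radical: "cyclotomic n' ^ b = cyclotomic n * t + [:int p:] * w"
    and van: "vanishes_on T c"
  shows "vanishes_on (insert n T) c"
  unfolding vanishes_on_def
proof
  fix f assume f: "f \<in> Phi_star (insert n T)"
  obtain g e where gT: "g \<in> Phi_star T" and fg: "f = g * cyclotomic n ^ e"
    using Phi_star_insert_elim[OF f] .
  have fS: "f \<in> Phi_star S" using f TS nS Phi_star_mono[of "insert n T" S] by auto
  have "lead_coeff (to_R f :: 'a poly) = 1" by (rule lead_coeff_to_R[OF lead_coeff_Phi_star[OF S0 fS]])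
  moreover have "\<And>x::'a. (\<forall>j. of_nat p ^ j dvd x) \<Longrightarrow> x = 0"
    using sep unfolding p_adically_separated_def by blast
  moreover have "\<exists>u z. c f = to_R f * u + smult (of_nat p ^ j) z" for j
  proof -
    define N where "N = b * (e + j)"
    obtain A B where AB: "cyclotomic n' ^ N = cyclotomic n ^ e * A + [:int p:] ^ j * B"
      using power_in_ideal_of_powers[OF radical] unfolding N_def .
    txt \<open>\<open>c\<close> vanishes modulo \<open>G\<close>, and \<open>G \<equiv> f A\<close> modulo \<open>p\<^sup>j\<close>; compatibility along
      \<open>f, G | F\<close> transports this to \<open>c f\<close>.\<close>
    define G where "G = g * cyclotomic n' ^ N"
    define F where "F = f * cyclotomic n' ^ N"
    have GT: "G \<in> Phi_star T" unfolding G_def by (rule Phi_star_mult[OF gT cyclotomic_power_in_Phi_star[OF n'T]])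
    then have GS: "G \<in> Phi_star S" using Phi_star_mono[OF TS] by blast
    have FS: "F \<in> Phi_star S"
      unfolding F_def using n'T TS by (intro Phi_star_mult[OF fS cyclotomic_power_in_Phi_star]) auto
    obtain k where k: "c F - c f = to_R f * k"
      using comp fS FS unfolding compatible_def F_def by (meson dvdE dvd_triv_left)
    have "G dvd F" unfolding G_def F_def fg by (simp add: mult_ac)
    then have "to_R G dvd c F - c G" using comp GS FS unfolding compatible_def by blast
    moreover have "to_R G dvd c G" using van GT unfolding vanishes_on_def by blast
    ultimately obtain y where y: "c F = to_R G * y" by (metis diff_add_cancel dvd_add dvdE)
    have "(to_R G :: 'a poly) = to_R f * to_R A + smult (of_nat p ^ j) (to_R g * to_R B)"
      unfolding G_def AB fg to_R_mult to_R_add to_R_power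
      by (simp add: algebra_simps poly_const_pow map_poly_pCons)
    then have "c f = to_R f * (to_R A * y - k) + smult (of_nat p ^ j) (to_R g * to_R B * y)"
      using y k by (simp add: algebra_simps)
    then show ?thesis by blast
  qed
  ultimately show "to_R f dvd c f" by (rule monic_dvd_if_dvd_modulo_powers)
qed

lemma successively_iff_nth:
  "successively P xs \<longleftrightarrow> (\<forall>i. Suc i < length xs \<longrightarrow> P (xs ! i) (xs ! Suc i))"
  by (induction P xs rule: successively.induct) (auto simp: nth_Cons less_Suc_eq_0_disj split: nat.split)

lemma chain_in_iff_successively:
  "chain_in R S xs \<longleftrightarrow> xs \<noteq> [] \<and> set xs \<subseteq> S \<and> successively (equiv_R R) xs"
  by (simp add: chain_in_def successively_iff_nth)

lemma equiv_R_refl: "equiv_R R n n"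
  by (simp add: equiv_R_def)

lemma equiv_R_sym: "equiv_R R m n \<Longrightarrow> equiv_R R n m"
  unfolding equiv_R_def by blast

definition chain_linked :: "'a::comm_ring_1 itself \<Rightarrow> nat set \<Rightarrow> nat \<Rightarrow> nat \<Rightarrow> bool" where
  "chain_linked R S m n \<longleftrightarrow> (\<exists>xs. chain_in R S xs \<and> hd xs = m \<and> last xs = n)"

lemma chain_linked_refl: "n \<in> S \<Longrightarrow> chain_linked R S n n"
  unfolding chain_linked_def by (intro exI[of _ "[n]"]) (simp add: chain_in_iff_successively)

lemma chain_linked_sym:
  assumes "chain_linked R S m n"
  shows "chain_linked R S n m"
proof -
  obtain xs where xs: "chain_in R S xs" "hd xs = m" "last xs = n"
    using assms unfolding chain_linked_def by blast
  then have "chain_in R S (rev xs)"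
    by (auto simp: chain_in_iff_successively intro: successively_mono equiv_R_sym)
  then show ?thesis
    using xs unfolding chain_linked_def
    by (intro exI[of _ "rev xs"]) (auto simp: hd_rev last_rev chain_in_iff_successively)
qed

lemma chain_linked_trans:
  assumes "chain_linked R S l m" "chain_linked R S m n"
  shows "chain_linked R S l n"
proof -
  obtain xs where xs: "chain_in R S xs" "hd xs = l" "last xs = m"
    using assms(1) unfolding chain_linked_def by blast
  obtain ys where ys: "chain_in R S ys" "hd ys = m" "last ys = n"
    using assms(2) unfolding chain_linked_def by blast
  have "chain_in R S (xs @ ys)"
    using xs ys by (auto simp: chain_in_iff_successively successively_append_iff equiv_R_refl)
  then show ?thesis
    using xs ys unfolding chain_linked_def
    by (intro exI[of _ "xs @ ys"]) (auto simp: chain_in_iff_successively)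
qed

lemma chain_linked_step:
  assumes "chain_linked R S m n" "n' \<in> S" "equiv_R R n n'"
  shows "chain_linked R S m n'"
proof -
  have "n \<in> S"
    using assms(1) unfolding chain_linked_def chain_in_iff_successively by (metis last_in_set subsetD)
  then have "chain_linked R S n n'"
    using assms(2,3) unfolding chain_linked_def by (intro exI[of _ "[n, n']"]) (simp add: chain_in_iff_successively)
  with assms(1) show ?thesis by (rule chain_linked_trans)
qed

lemma chain_linked_induct [consumes 1, case_names base step]:
  assumes "chain_linked R S m n" "P m"
    and "\<And>a b. P a \<Longrightarrow> a \<in> S \<Longrightarrow> b \<in> S \<Longrightarrow> equiv_R R a b \<Longrightarrow> P b"
  shows "P n"
proof -
  obtain xs where "chain_in R S xs" "hd xs = m" "last xs = n"
    using assms(1) unfolding chain_linked_def by blast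
  then show ?thesis using assms(2)
  proof (induction xs arbitrary: m)
    case (Cons x xs)
    show ?case
    proof (cases "xs = []")
      case False
      then have xs: "chain_in R S xs" "x \<in> S" "hd xs \<in> S" "equiv_R R x (hd xs)"
        using Cons.prems(1) hd_in_set[OF False]
        by (auto simp: chain_in_iff_successively successively_Cons)
      then have "P (hd xs)" using assms(3)[of x "hd xs"] Cons.prems(2,4) by simp
      then show ?thesis using Cons.IH[OF xs(1) refl] Cons.prems(3) False by simp
    qed (use Cons in simp)
  qed (simp add: chain_in_iff_successively)
qed

lemma vanishes_on_insert_if_equiv_R:
  fixes c :: "int poly \<Rightarrow> 'a::comm_ring_1 poly"
  assumes comp: "compatible S c" and TS: "T \<subseteq> S" and S0: "0 \<notin> S"
    and m: "m \<in> T" and n: "n \<in> S" and equiv: "equiv_R TYPE('a) m n" and van: "vanishes_on T c"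
  shows "vanishes_on (insert n T) c"
proof -
  consider "m = n" | "(UNIV :: 'a set) = {0}"
    | p k where "prime p" "p_adically_separated TYPE('a) p" "m = n * p ^ k \<or> n = m * p ^ k"
    using equiv unfolding equiv_R_def by blast
  then show ?thesis
  proof cases
    case 1
    then show ?thesis using m van by (simp add: insert_absorb)
  next
    case 2
    then show ?thesis by (rule vanishes_on_trivial_ring)
  next
    case (3 p k)
    have "m > 0" "n > 0" using m n TS S0 by (auto intro: gr0I)
    then have "cyclotomic_in_radical p m n"
      using 3(3) cyclotomic_in_radical_mult_prime_power[OF 3(1)] by blast
    then obtain b t w where "cyclotomic m ^ b = cyclotomic n * t + [:int p:] * w"
      unfolding cyclotomic_in_radical_def cong_modp_iff by auto
    then show ?thesis by (rule vanishes_on_insert[OF comp TS n S0 m 3(2) _ van])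
  qed
qed

lemma vanishes_on_if_chain_linked:
  fixes c :: "int poly \<Rightarrow> 'a::comm_ring_1 poly"
  assumes S0: "0 \<notin> S" and S'S: "S' \<subseteq> S"
    and linked: "\<forall>n\<in>S. \<exists>m\<in>S'. chain_linked TYPE('a) S m n"
    and comp: "compatible S c" and van: "vanishes_on S' c"
  shows "vanishes_on S c"
proof (rule vanishes_on_if_finite_subsets)
  have "vanishes_on (S' \<union> A) c" if "finite A" "A \<subseteq> S" for A
    using that
  proof (induction A rule: finite_induct)
    case empty
    then show ?case using van by simp
  next
    case (insert a A)
    let ?T = "S' \<union> A"
    have TS: "?T \<subseteq> S" using insert.prems S'S by auto
    obtain m where m: "m \<in> S'" "chain_linked TYPE('a) S m a" using linked insert.prems by auto
    from m(2) have "vanishes_on (insert a ?T) c"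
    proof (induction rule: chain_linked_induct)
      case base
      then show ?case using insert m(1) by (simp add: insert_absorb)
    next
      case (step x y)
      have "insert x ?T \<subseteq> S" using step TS by simp
      from vanishes_on_insert_if_equiv_R[OF comp this S0 insertI1 \<open>y \<in> S\<close>
          \<open>equiv_R TYPE('a) x y\<close> \<open>vanishes_on (insert x ?T) c\<close>]
      show ?case by (rule vanishes_on_subset) auto
    qed
    then show ?case by simp
  qed
  then show "vanishes_on A c" if "finite A" "A \<subseteq> S" for A
    using that by (meson vanishes_on_subset sup_ge2)
qed

section \<open>Injectivity of the restriction maps\<close>

definition compl_class :: "nat set \<Rightarrow> (int poly \<Rightarrow> 'a::comm_ring_1 poly) \<Rightarrow> (int poly \<Rightarrow> 'a poly) set" where
  "compl_class S a = {b. compatible S b \<and> same_elt S a b}"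

lemma cyc_compl_eq: "cyc_compl S = {compl_class S a | a. compatible S a}"
  by (simp add: cyc_compl_def compl_class_def)

lemma same_elt_refl: "same_elt S a a"
  by (simp add: same_elt_def)

lemma same_elt_sym: "same_elt S a b \<Longrightarrow> same_elt S b a"
  unfolding same_elt_def by (metis dvd_minus_iff minus_diff_eq)

lemma same_elt_trans:
  assumes "same_elt S a b" "same_elt S b c"
  shows "same_elt S a c"
  unfolding same_elt_def
proof
  fix f assume "f \<in> Phi_star S"
  then have "to_R f dvd (a f - b f) + (b f - c f)"
    using assms unfolding same_elt_def by (blast intro: dvd_add)
  then show "to_R f dvd a f - c f" by simp
qed

lemma same_elt_subset: "same_elt S a b \<Longrightarrow> S' \<subseteq> S \<Longrightarrow> same_elt S' a b"
  unfolding same_elt_def using Phi_star_mono by blast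

lemma same_elt_iff_vanishes_on: "same_elt S a b \<longleftrightarrow> vanishes_on S (a - b)"
  by (simp add: same_elt_def vanishes_on_def)

lemma compatible_subset: "compatible S a \<Longrightarrow> S' \<subseteq> S \<Longrightarrow> compatible S' a"
  unfolding compatible_def using Phi_star_mono by blast

lemma compatible_diff:
  assumes "compatible S a" "compatible S b"
  shows "compatible S (a - b)"
  unfolding compatible_def
proof (intro ballI impI)
  fix f g assume "f \<in> Phi_star S" "g \<in> Phi_star S" "f dvd g"
  then have "to_R f dvd (a g - a f) - (b g - b f)"
    using assms unfolding compatible_def by (blast intro: dvd_diff)
  then show "to_R f dvd (a - b) g - (a - b) f" by (simp add: algebra_simps)
qed

lemma compl_class_eq_iff:
  assumes "compatible S a" "compatible S a'"
  shows "compl_class S a = compl_class S a' \<longleftrightarrow> same_elt S a a'"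
proof
  assume "compl_class S a = compl_class S a'"
  moreover have "a' \<in> compl_class S a'" using assms(2) by (simp add: compl_class_def same_elt_refl)
  ultimately show "same_elt S a a'" unfolding compl_class_def by blast
next
  assume aa': "same_elt S a a'"
  have "same_elt S a b \<longleftrightarrow> same_elt S a' b" for b
    using same_elt_trans[of S a' a b] same_elt_trans[OF aa', of b] same_elt_sym[OF aa'] by blast
  then show "compl_class S a = compl_class S a'" by (simp add: compl_class_def)
qed

lemma rho_compl_class:
  assumes S'S: "S' \<subseteq> S" and a: "compatible S a"
  shows "rho S S' (compl_class S a) = compl_class S' a"
proof
  show "rho S S' (compl_class S a) \<subseteq> compl_class S' a"
  proof
    fix b assume "b \<in> rho S S' (compl_class S a)"
    then obtain a0 where "same_elt S a a0" "same_elt S' a0 b" "compatible S' b"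
      unfolding rho_def compl_class_def by blast
    then show "b \<in> compl_class S' a"
      using same_elt_trans[OF same_elt_subset[OF _ S'S]] unfolding compl_class_def by blast
  qed
  show "compl_class S' a \<subseteq> rho S S' (compl_class S a)"
    unfolding rho_def compl_class_def using a same_elt_refl by blast
qed

lemma inj_on_rho_if_vanishing_extends:
  assumes S'S: "S' \<subseteq> S"
    and extends: "\<And>c :: int poly \<Rightarrow> 'a::comm_ring_1 poly. compatible S c \<Longrightarrow> vanishes_on S' c \<Longrightarrow> vanishes_on S c"
  shows "inj_on (rho S S' :: (int poly \<Rightarrow> 'a poly) set \<Rightarrow> _) (cyc_compl S)"
proof (rule inj_onI)
  fix X Y :: "(int poly \<Rightarrow> 'a poly) set"
  assume "X \<in> cyc_compl S" "Y \<in> cyc_compl S" and eq: "rho S S' X = rho S S' Y"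
  then obtain a a' where a: "compatible S a" "X = compl_class S a"
    and a': "compatible S a'" "Y = compl_class S a'"
    unfolding cyc_compl_eq by blast
  have "compl_class S' a = compl_class S' a'"
    using eq by (simp add: a a' rho_compl_class[OF S'S])
  then have "same_elt S' a a'"
    using compl_class_eq_iff compatible_subset[OF _ S'S] a(1) a'(1) by blast
  then have "same_elt S a a'"
    using extends[OF compatible_diff[OF a(1) a'(1)]] by (simp add: same_elt_iff_vanishes_on)
  then show "X = Y" by (simp add: a a' compl_class_eq_iff)
qed

lemma inj_on_rho_if_chain_linked:
  assumes "0 \<notin> S" "S' \<subseteq> S" "\<forall>n\<in>S. \<exists>m\<in>S'. chain_linked TYPE('a::comm_ring_1) S m n"
  shows "inj_on (rho S S' :: (int poly \<Rightarrow> 'a poly) set \<Rightarrow> _) (cyc_compl S)"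
  by (rule inj_on_rho_if_vanishing_extends[OF assms(2)]) (rule vanishes_on_if_chain_linked[OF assms])

lemma inj_on_rho_if_connected_R:
  assumes "0 \<notin> S" "connected_R TYPE('a::comm_ring_1) S" "S' \<subseteq> S" "S' \<noteq> {}"
  shows "inj_on (rho S S' :: (int poly \<Rightarrow> 'a poly) set \<Rightarrow> _) (cyc_compl S)"
proof -
  obtain s where "s \<in> S'" using assms(4) by blast
  then have "\<forall>n\<in>S. \<exists>m\<in>S'. chain_linked TYPE('a) S m n"
    using assms(2,3) unfolding connected_R_def chain_linked_def by blast
  then show ?thesis by (rule inj_on_rho_if_chain_linked[OF assms(1,3)])
qed

lemma p_adically_separated_int:
  assumes "p \<ge> 2"
  shows "p_adically_separated TYPE(int) p"
  unfolding p_adically_separated_def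
proof (intro allI impI)
  fix x :: int
  assume "\<forall>j. of_nat p ^ j dvd x"
  then have "int p ^ nat \<bar>x\<bar> dvd x" by simp
  moreover have "\<bar>x\<bar> < int p ^ nat \<bar>x\<bar>"
  proof -
    have "nat \<bar>x\<bar> < 2 ^ nat \<bar>x\<bar>" by (rule less_exp)
    also have "\<dots> \<le> p ^ nat \<bar>x\<bar>" using assms by (intro power_mono) auto
    finally have "int (nat \<bar>x\<bar>) < int (p ^ nat \<bar>x\<bar>)" by (simp only: of_nat_less_iff)
    then show ?thesis by simp
  qed
  ultimately show "x = 0" using dvd_imp_le_int[of x "int p ^ nat \<bar>x\<bar>"] by force
qed

lemma connected_R_int: "connected_R TYPE(int) {1..}"
proof -
  have "chain_linked TYPE(int) {1..} 1 n" if "n \<ge> 1" for n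
    using that
  proof (induction n rule: less_induct)
    case (less n)
    show ?case
    proof (cases "n = 1")
      case False
      then obtain p m where p: "prime p" and n: "n = m * p"
        using prime_factor_nat by (metis dvd_def mult.commute)
      then have "m \<ge> 1" "m < n" using less.prems prime_gt_1_nat by (auto intro: gr0I)
      moreover have "equiv_R TYPE(int) m n"
        unfolding equiv_R_def using p n prime_ge_2_nat p_adically_separated_int by (metis power_one_right)
      ultimately show ?thesis
        using less.IH[of m] less.prems chain_linked_step[of "TYPE(int)" "{1..}" 1 m n] by auto
    qed (simp add: chain_linked_refl)
  qed
  then show ?thesis
    unfolding connected_R_def chain_linked_def[symmetric]
    by (auto intro: chain_linked_trans chain_linked_sym)
qed

theorem theorem4p2:
  shows "(\<forall>S S'. 0 \<notin> S \<and> S' \<subseteq> S \<and>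
            (\<forall>n\<in>S. \<exists>xs. chain_in TYPE('a::comm_ring_1) S xs \<and> hd xs \<in> S' \<and> last xs = n)
          \<longrightarrow> inj_on (rho S S' :: (int poly \<Rightarrow> 'a poly) set \<Rightarrow> _) (cyc_compl S))
       \<and> (\<forall>S S'. 0 \<notin> S \<and> connected_R TYPE('a) S \<and> S' \<subseteq> S \<and> S' \<noteq> {}
          \<longrightarrow> inj_on (rho S S' :: (int poly \<Rightarrow> 'a poly) set \<Rightarrow> _) (cyc_compl S))
       \<and> (\<forall>S'. S' \<subseteq> {1..} \<and> S' \<noteq> {}
          \<longrightarrow> inj_on (rho {1..} S' :: (int poly \<Rightarrow> int poly) set \<Rightarrow> _) (cyc_compl {1..}))"
proof (intro conjI allI impI)
  fix S S' :: "nat set"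
  assume "0 \<notin> S \<and> S' \<subseteq> S \<and>
    (\<forall>n\<in>S. \<exists>xs. chain_in TYPE('a) S xs \<and> hd xs \<in> S' \<and> last xs = n)"
  then show "inj_on (rho S S' :: (int poly \<Rightarrow> 'a poly) set \<Rightarrow> _) (cyc_compl S)"
    by (intro inj_on_rho_if_chain_linked) (unfold chain_linked_def, blast+)
next
  fix S S' :: "nat set"
  assume "0 \<notin> S \<and> connected_R TYPE('a) S \<and> S' \<subseteq> S \<and> S' \<noteq> {}"
  then show "inj_on (rho S S' :: (int poly \<Rightarrow> 'a poly) set \<Rightarrow> _) (cyc_compl S)"
    by (intro inj_on_rho_if_connected_R) auto
next
  fix S' :: "nat set"
  assume "S' \<subseteq> {1..} \<and> S' \<noteq> {}"
  then show "inj_on (rho {1..} S' :: (int poly \<Rightarrow> int poly) set \<Rightarrow> _) (cyc_compl {1..})"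
    using connected_R_int by (intro inj_on_rho_if_connected_R) auto
qed

end
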